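(* Let $A,B \in \mathcal{C}_1^{m \times n}$, $C \in \mathcal{C}_1^{n \times p}$ and $\lambda \in \mathcal{C}$ be given. Then (a) $A=B \iff \Phi_1(A) = \Phi_1(B)$. (b) $\Phi_1(A + B) = \Phi_1(A) + \Phi_1(B)$. (c) $\Phi_1(AC) = \Phi_1(A)\Phi_1(C)$, $\Phi_1(\lambda A) = \lambda \Phi_1(A)$, $\Phi_1(I_m) = I_{2m}$. (d) $\Phi_1(\overline{A}) = \begin{bmatrix} 0 & I_m \\ I_m & 0 \end{bmatrix} \Phi_1(A) \begin{bmatrix} 0 & I_n \\ I_n & 0 \end{bmatrix}$. (e) Let $A = A_0 + A_1 e$ and denote $A^{\#} = A_0^* - A_1^* e$, where $A_0^*$ and $A_1^*$ are the conjugate transposes of the complex matrices $A_0$ and $A_1$. Then $\Phi_1(A^{\#}) = \Phi_1(A)^*$, the conjugate transpose of the complex matrix $\Phi_1(A)$. (f) $A = \frac{1}{4}[(1 - ie)I_m,\ (i - e)I_m]\, \Phi_1(A)\, [(1 - ie)I_n,\ (e - i)I_n]^T$. (g) (for $m=n$) $A$ is invertible $\iff \Phi_1(A)$ is invertible, in which case $\Phi_1(A^{-1}) = \Phi_1(A)^{-1}$. (h) (for $m=n$) $p_A(A) = 0$, where $p_A(x) = \det[x I_{2m} - \Phi_1(A)]$.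
   Context: $\mathcal{C}$ denotes the complex numbers and $\mathcal{C}_1 = \mathcal{C}\{e\}$ is the complex Clifford algebra on one generator $e$ with $e^2 = -1$; every element is $a_0 + a_1 e$ with $a_0,a_1\in\mathcal{C}$, and $e$ commutes with complex scalars. $\mathcal{C}_1^{m\times n}$ denotes $m\times n$ matrices over $\mathcal{C}_1$; every $A \in \mathcal{C}_1^{m \times n}$ is written uniquely as $A = A_0 + A_1 e$ with $A_0, A_1 \in \mathcal{C}^{m \times n}$, and its conjugate is $\overline{A} = A_0 - A_1 e$. The complex matrix representation of $A$ is defined by $\Phi_1(A) = \begin{bmatrix} A_0 + A_1 i & 0 \\ 0 & A_0 - A_1 i \end{bmatrix}$, where $i$ is the complex imaginary unit. $I_m$ denotes the $m\times m$ identity matrix. These properties come from the universal factorization equality $J_{2m}\,\mathrm{diag}(A,\overline{A})\,J_{2n}^{-1} = \Phi_1(A)$ with $J_{2m} = \frac12\begin{bmatrix}(1-ie)I_m & -(i-e)I_m\\ -(i-e)I_m & (1-ie)I_m\end{bmatrix}$, $J_{2n}^{-1} = \frac12\begin{bmatrix}(1-ie)I_n & (i-e)I_n\\ (i-e)I_n & (1-ie)I_n\end{bmatrix}$. *)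

theory Defs
  imports "Jordan_Normal_Form.Matrix" "Jordan_Normal_Form.Char_Poly"
    "Jordan_Normal_Form.Schur_Decomposition"
begin

text \<open>An element a0 + a1 e is represented by the pair of its complex components.\<close>
datatype cl1 = Cl1 (cl_re0: complex) (cl_re1: complex)

lemma cl1_eq_iff: "x = y \<longleftrightarrow> cl_re0 x = cl_re0 y \<and> cl_re1 x = cl_re1 y"
  by (cases x; cases y) auto

instantiation cl1 :: comm_ring_1
begin
definition "0 = Cl1 0 0"
definition "1 = Cl1 1 0"
definition "x + y = Cl1 (cl_re0 x + cl_re0 y) (cl_re1 x + cl_re1 y)"
definition "x - y = Cl1 (cl_re0 x - cl_re0 y) (cl_re1 x - cl_re1 y)"
definition "- x = Cl1 (- cl_re0 x) (- cl_re1 x)"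
text \<open>(a0 + a1 e)(b0 + b1 e) = (a0 b0 - a1 b1) + (a0 b1 + a1 b0) e, since e^2 = -1.\<close>
definition "x * y = Cl1 (cl_re0 x * cl_re0 y - cl_re1 x * cl_re1 y)
                        (cl_re0 x * cl_re1 y + cl_re1 x * cl_re0 y)"
instance
  by standard (auto simp: cl1_eq_iff zero_cl1_def one_cl1_def plus_cl1_def minus_cl1_def
      uminus_cl1_def times_cl1_def algebra_simps)
end

definition cl_e :: cl1 where "cl_e = Cl1 0 1"
definition cl_of :: "complex \<Rightarrow> cl1" where "cl_of a = Cl1 a 0"

definition cmat0 :: "cl1 mat \<Rightarrow> complex mat" where "cmat0 A = map_mat cl_re0 A"
definition cmat1 :: "cl1 mat \<Rightarrow> complex mat" where "cmat1 A = map_mat cl_re1 A"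
definition cl_mat :: "complex mat \<Rightarrow> complex mat \<Rightarrow> cl1 mat" where
  "cl_mat A0 A1 = map_mat cl_of A0 + cl_e \<cdot>\<^sub>m map_mat cl_of A1"

definition cl_conj_mat :: "cl1 mat \<Rightarrow> cl1 mat" where
  "cl_conj_mat A = cl_mat (cmat0 A) (- cmat1 A)"

definition cl_sharp :: "cl1 mat \<Rightarrow> cl1 mat" where
  "cl_sharp A = cl_mat (mat_adjoint (cmat0 A)) (- mat_adjoint (cmat1 A))"

definition Phi1 :: "cl1 mat \<Rightarrow> complex mat" where
  "Phi1 A = four_block_mat (cmat0 A + \<i> \<cdot>\<^sub>m cmat1 A) (0\<^sub>m (dim_row A) (dim_col A))
                           (0\<^sub>m (dim_row A) (dim_col A)) (cmat0 A - \<i> \<cdot>\<^sub>m cmat1 A)"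

definition block_row :: "'a::zero mat \<Rightarrow> 'a mat \<Rightarrow> 'a mat" where
  "block_row X Y = four_block_mat X Y (0\<^sub>m 0 (dim_col X)) (0\<^sub>m 0 (dim_col Y))"

definition poly_mat_eval :: "complex poly \<Rightarrow> cl1 mat \<Rightarrow> cl1 mat" where
  "poly_mat_eval p A = foldr (\<lambda>k M. cl_of (coeff p k) \<cdot>\<^sub>m (A ^\<^sub>m k) + M)
       [0..<Suc (degree p)] (0\<^sub>m (dim_row A) (dim_row A))"

end

theory Submission
  imports Defs
begin

(* The map a0 + a1 e |-> (a0 + i a1, a0 - i a1), i.e. substituting e := i and e := -i, is a ring
  isomorphism C_1 ~= C x C, and Phi1 A is the block diagonal matrix of the two images of A.
  Hence (a)-(f) are componentwise statements about block diagonal matrices. For (g), an element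
  of C_1 is a unit iff both of its images are nonzero, and det (Phi1 A) is the product of the two
  images of det A. For (h), the characteristic polynomial of Phi1 A is the product of those of
  the two diagonal blocks, and each block is annihilated by its own characteristic polynomial
  (Cayley-Hamilton, proved by Schur triangularization); so both images of p_A(A) vanish. *)

section \<open>The splitting of C_1 into C x C\<close>

definition cl_at_i :: "cl1 \<Rightarrow> complex" where
  "cl_at_i x = cl_re0 x + \<i> * cl_re1 x"

definition cl_at_neg_i :: "cl1 \<Rightarrow> complex" where
  "cl_at_neg_i x = cl_re0 x - \<i> * cl_re1 x"

interpretation cl_at_i: comm_ring_hom cl_at_i
  by unfold_locales
    (auto simp: cl_at_i_def plus_cl1_def times_cl1_def one_cl1_def zero_cl1_def algebra_simps)

interpretation cl_at_neg_i: comm_ring_hom cl_at_neg_i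
  by unfold_locales
    (auto simp: cl_at_neg_i_def plus_cl1_def times_cl1_def one_cl1_def zero_cl1_def algebra_simps)

definition cl_of_pair :: "complex \<Rightarrow> complex \<Rightarrow> cl1" where
  "cl_of_pair p q = Cl1 ((p + q) / 2) ((p - q) / (2 * \<i>))"

lemma cl_at_i_of_pair [simp]: "cl_at_i (cl_of_pair p q) = p"
  and cl_at_neg_i_of_pair [simp]: "cl_at_neg_i (cl_of_pair p q) = q"
  by (auto simp: cl_at_i_def cl_at_neg_i_def cl_of_pair_def field_simps)

lemma cl_of_pair_at: "cl_of_pair (cl_at_i x) (cl_at_neg_i x) = x"
  by (cases x) (auto simp: cl_at_i_def cl_at_neg_i_def cl_of_pair_def field_simps)

lemma cl_eq_iff_at: "x = y \<longleftrightarrow> cl_at_i x = cl_at_i y \<and> cl_at_neg_i x = cl_at_neg_i y"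
  by (metis cl_of_pair_at)

lemma cl_at_i_of [simp]: "cl_at_i (cl_of c) = c"
  and cl_at_neg_i_of [simp]: "cl_at_neg_i (cl_of c) = c"
  by (auto simp: cl_at_i_def cl_at_neg_i_def cl_of_def)

lemma cl_dvd_one_iff: "x dvd 1 \<longleftrightarrow> cl_at_i x \<noteq> 0 \<and> cl_at_neg_i x \<noteq> 0"
proof
  assume "x dvd 1"
  then obtain y where "1 = x * y" by (auto elim: dvdE)
  then have "cl_at_i x * cl_at_i y = 1" "cl_at_neg_i x * cl_at_neg_i y = 1"
    by (metis cl_at_i.hom_mult cl_at_i.hom_one, metis cl_at_neg_i.hom_mult cl_at_neg_i.hom_one)
  then show "cl_at_i x \<noteq> 0 \<and> cl_at_neg_i x \<noteq> 0" by auto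
next
  assume nz: "cl_at_i x \<noteq> 0 \<and> cl_at_neg_i x \<noteq> 0"
  have "x * cl_of_pair (1 / cl_at_i x) (1 / cl_at_neg_i x) = 1"
    using nz by (simp add: cl_eq_iff_at[of _ 1] cl_at_i.hom_mult cl_at_neg_i.hom_mult)
  then show "x dvd 1" by (metis dvdI)
qed

lemma cl1_mat_eq_iff_map_at:
  assumes "M \<in> carrier_mat m n" "N \<in> carrier_mat m n"
  shows "M = N \<longleftrightarrow>
    map_mat cl_at_i M = map_mat cl_at_i N \<and> map_mat cl_at_neg_i M = map_mat cl_at_neg_i N"
proof (intro iffI conjI; (elim conjE)?)
  assume at: "map_mat cl_at_i M = map_mat cl_at_i N" "map_mat cl_at_neg_i M = map_mat cl_at_neg_i N"
  show "M = N"
  proof (rule eq_matI)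
    fix i j assume "i < dim_row N" "j < dim_col N"
    then show "M $$ (i, j) = N $$ (i, j)"
      using assms at by (subst cl_eq_iff_at) (metis carrier_matD index_map_mat)
  qed (use assms in auto)
qed auto

section \<open>Block matrices and invertibility\<close>

lemma four_block_mat_inject:
  assumes "A \<in> carrier_mat nr1 nc1" "B \<in> carrier_mat nr1 nc2"
    "C \<in> carrier_mat nr2 nc1" "D \<in> carrier_mat nr2 nc2"
    "A' \<in> carrier_mat nr1 nc1" "B' \<in> carrier_mat nr1 nc2"
    "C' \<in> carrier_mat nr2 nc1" "D' \<in> carrier_mat nr2 nc2"
  shows "four_block_mat A B C D = four_block_mat A' B' C' D' \<longleftrightarrow>
    A = A' \<and> B = B' \<and> C = C' \<and> D = D'"
proof -
  have blocks: "A = mat nr1 nc1 (\<lambda>(i, j). M $$ (i, j))"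
    "B = mat nr1 nc2 (\<lambda>(i, j). M $$ (i, nc1 + j))"
    "C = mat nr2 nc1 (\<lambda>(i, j). M $$ (nr1 + i, j))"
    "D = mat nr2 nc2 (\<lambda>(i, j). M $$ (nr1 + i, nc1 + j))"
    if "M = four_block_mat A B C D" "A \<in> carrier_mat nr1 nc1" "B \<in> carrier_mat nr1 nc2"
      "C \<in> carrier_mat nr2 nc1" "D \<in> carrier_mat nr2 nc2" for M A B C D
    using that by (auto intro!: eq_matI)
  show ?thesis
    using blocks[OF refl assms(1-4)] blocks[OF refl assms(5-8)] by metis
qed

lemma mult_four_block_diag_mat:
  fixes A C :: "'a :: semiring_0 mat"
  assumes "A \<in> carrier_mat m1 n1" "B \<in> carrier_mat m2 n2"
    "C \<in> carrier_mat n1 p1" "D \<in> carrier_mat n2 p2"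
  shows "four_block_mat A (0\<^sub>m m1 n2) (0\<^sub>m m2 n1) B * four_block_mat C (0\<^sub>m n1 p2) (0\<^sub>m n2 p1) D =
    four_block_mat (A * C) (0\<^sub>m m1 p2) (0\<^sub>m m2 p1) (B * D)"
  using assms by (subst mult_four_block_mat[of _ m1 n1 _ n2 _ m2 _ _ p1 _ p2]) auto

lemma swap_four_block_diag_mat:
  fixes X :: "'a :: semiring_1 mat"
  assumes "X \<in> carrier_mat m n" "Y \<in> carrier_mat m n"
  shows "four_block_mat (0\<^sub>m m m) (1\<^sub>m m) (1\<^sub>m m) (0\<^sub>m m m) * four_block_mat X (0\<^sub>m m n) (0\<^sub>m m n) Y *
      four_block_mat (0\<^sub>m n n) (1\<^sub>m n) (1\<^sub>m n) (0\<^sub>m n n) =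
    four_block_mat Y (0\<^sub>m m n) (0\<^sub>m m n) X"
  using assms
  by (simp add: mult_four_block_mat[of _ m m _ m _ m _ _ n _ n]
      mult_four_block_mat[of _ m n _ n _ m _ _ n _ n])

lemma index_mat_adjoint [simp]:
  "i < dim_col A \<Longrightarrow> j < dim_row A \<Longrightarrow> mat_adjoint A $$ (i, j) = conjugate (A $$ (j, i))"
  "dim_row (mat_adjoint A) = dim_col A" "dim_col (mat_adjoint A) = dim_row A"
  by (auto simp: mat_adjoint_def mat_of_rows_index)

lemma mat_adjoint_zero [simp]: "mat_adjoint (0\<^sub>m m n) = 0\<^sub>m n m"
  by (intro eq_matI) auto

lemma mat_adjoint_four_block_mat:
  assumes "A \<in> carrier_mat nr1 nc1" "B \<in> carrier_mat nr1 nc2"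
    "C \<in> carrier_mat nr2 nc1" "D \<in> carrier_mat nr2 nc2"
  shows "mat_adjoint (four_block_mat A B C D) =
    four_block_mat (mat_adjoint A) (mat_adjoint C) (mat_adjoint B) (mat_adjoint D)"
  using assms by (intro eq_matI) auto

lemma block_row_mult_four_block_diag_mult_block_col:
  fixes U V :: "'a :: comm_ring_1 mat"
  assumes U: "U \<in> carrier_mat m n" and V: "V \<in> carrier_mat m n"
  shows "block_row (a \<cdot>\<^sub>m 1\<^sub>m m) (b \<cdot>\<^sub>m 1\<^sub>m m) * four_block_mat U (0\<^sub>m m n) (0\<^sub>m m n) V *
      transpose_mat (block_row (c \<cdot>\<^sub>m 1\<^sub>m n) (d \<cdot>\<^sub>m 1\<^sub>m n)) =
    (a * c) \<cdot>\<^sub>m U + (b * d) \<cdot>\<^sub>m V"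
proof -
  have "block_row (a \<cdot>\<^sub>m 1\<^sub>m m) (b \<cdot>\<^sub>m 1\<^sub>m m) * four_block_mat U (0\<^sub>m m n) (0\<^sub>m m n) V =
      four_block_mat (a \<cdot>\<^sub>m U) (b \<cdot>\<^sub>m V) (0\<^sub>m 0 n) (0\<^sub>m 0 n)"
    unfolding block_row_def using U V
    by (subst mult_four_block_mat[of _ m m _ m _ 0 _ _ n _ n])
      (auto simp: mult_smult_assoc_mat[OF one_carrier_mat U]
        mult_smult_assoc_mat[OF one_carrier_mat V])
  moreover have "transpose_mat (block_row (c \<cdot>\<^sub>m 1\<^sub>m n) (d \<cdot>\<^sub>m 1\<^sub>m n)) =
      four_block_mat (c \<cdot>\<^sub>m 1\<^sub>m n) (0\<^sub>m n 0) (d \<cdot>\<^sub>m 1\<^sub>m n) (0\<^sub>m n 0)"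
    unfolding block_row_def by (intro eq_matI) auto
  ultimately show ?thesis
    using U V by (intro eq_matI) (auto simp: mult_four_block_mat[of _ m n _ n _ 0 _ _ n _ 0])
qed

lemma inverts_mat_carrier:
  assumes "A \<in> carrier_mat n n" "inverts_mat A X" "inverts_mat X A"
  shows "X \<in> carrier_mat n n"
proof -
  have "A * X = 1\<^sub>m n" "X * A = 1\<^sub>m (dim_row X)"
    using assms unfolding inverts_mat_def by auto
  then show ?thesis
    using assms(1) by (metis carrier_matD carrier_matI index_mult_mat(2,3) index_one_mat(2,3))
qed

lemma invertible_mat_iff_det_dvd_one:
  fixes A :: "'a :: comm_ring_1 mat"
  assumes A: "A \<in> carrier_mat n n"
  shows "invertible_mat A \<longleftrightarrow> det A dvd 1"
proof
  assume "invertible_mat A"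
  then obtain B where "inverts_mat A B" "inverts_mat B A"
    unfolding invertible_mat_def by blast
  with A have "B \<in> carrier_mat n n" "A * B = 1\<^sub>m n"
    using inverts_mat_carrier unfolding inverts_mat_def by auto
  then have "det A * det B = 1"
    using A by (metis det_mult det_one)
  then show "det A dvd 1" by (metis dvdI)
next
  assume "det A dvd 1"
  then obtain u where u: "det A * u = 1" by (metis dvdE)
  define B where "B = u \<cdot>\<^sub>m adj_mat A"
  have "B \<in> carrier_mat n n" "A * B = 1\<^sub>m n" "B * A = 1\<^sub>m n"
    using A adj_mat[OF A] u unfolding B_def
    by (auto simp: mult_smult_distrib mult_smult_assoc_mat ac_simps)
  then show "invertible_mat A"
    using A unfolding invertible_mat_def inverts_mat_def by auto
qed

section \<open>Evaluating polynomials at matrices\<close>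

definition mat_poly :: "'a :: comm_ring_1 poly \<Rightarrow> 'a mat \<Rightarrow> 'a mat" where
  "mat_poly p M =
    mat (dim_row M) (dim_row M) (\<lambda>(i, j). \<Sum>k\<le>degree p. coeff p k * (M ^\<^sub>m k) $$ (i, j))"

lemma mat_poly_dims [simp]:
  "dim_row (mat_poly p M) = dim_row M" "dim_col (mat_poly p M) = dim_row M"
  by (simp_all add: mat_poly_def)

lemma mat_poly_carrier [simp]: "M \<in> carrier_mat n n \<Longrightarrow> mat_poly p M \<in> carrier_mat n n"
  by auto

lemma index_mat_poly:
  assumes "M \<in> carrier_mat n n" "i < n" "j < n" "degree p < N"
  shows "mat_poly p M $$ (i, j) = (\<Sum>k<N. coeff p k * (M ^\<^sub>m k) $$ (i, j))"
  using assms unfolding mat_poly_def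
  by (auto intro!: sum.mono_neutral_cong_left intro: le_degree)

lemma mat_poly_0: "M \<in> carrier_mat n n \<Longrightarrow> mat_poly 0 M = 0\<^sub>m n n"
  by (intro eq_matI) (auto simp: mat_poly_def)

lemma mat_poly_add:
  assumes M: "M \<in> carrier_mat n n"
  shows "mat_poly (p + q) M = mat_poly p M + mat_poly q M"
proof (rule eq_matI)
  fix i j assume "i < dim_row (mat_poly p M + mat_poly q M)"
    and "j < dim_col (mat_poly p M + mat_poly q M)"
  then have ij: "i < n" "j < n" using M by auto
  define N where "N = Suc (max (degree p) (degree q))"
  have N: "degree (p + q) < N" "degree p < N" "degree q < N"
    using degree_add_le_max[of p q] unfolding N_def by linarith+
  show "mat_poly (p + q) M $$ (i, j) = (mat_poly p M + mat_poly q M) $$ (i, j)"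
    using M ij by (simp add: index_mat_poly[OF M ij N(1)] index_mat_poly[OF M ij N(2)]
        index_mat_poly[OF M ij N(3)] sum.distrib algebra_simps)
qed (use M in auto)

lemma mat_poly_smult:
  assumes M: "M \<in> carrier_mat n n"
  shows "mat_poly (smult a p) M = a \<cdot>\<^sub>m mat_poly p M"
proof (rule eq_matI)
  fix i j assume "i < dim_row (a \<cdot>\<^sub>m mat_poly p M)" "j < dim_col (a \<cdot>\<^sub>m mat_poly p M)"
  then have ij: "i < n" "j < n" using M by auto
  have N: "degree (smult a p) < Suc (degree p)" "degree p < Suc (degree p)"
    using degree_smult_le[of a p] by linarith+
  show "mat_poly (smult a p) M $$ (i, j) = (a \<cdot>\<^sub>m mat_poly p M) $$ (i, j)"
    using M ij by (simp add: index_mat_poly[OF M ij N(1)] index_mat_poly[OF M ij N(2)]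
        sum_distrib_left algebra_simps)
qed (use M in auto)

lemma mat_poly_const:
  assumes M: "M \<in> carrier_mat n n"
  shows "mat_poly [:a:] M = a \<cdot>\<^sub>m 1\<^sub>m n"
  using M by (intro eq_matI) (auto simp: mat_poly_def)

lemma mat_poly_shift:
  assumes M: "M \<in> carrier_mat n n"
  shows "mat_poly (pCons 0 p) M = mat_poly p M * M"
proof (rule eq_matI)
  fix i j assume "i < dim_row (mat_poly p M * M)" "j < dim_col (mat_poly p M * M)"
  then have ij: "i < n" "j < n" using M by auto
  define N where "N = Suc (degree p)"
  have "mat_poly (pCons 0 p) M $$ (i, j) = (\<Sum>k<Suc N. coeff (pCons 0 p) k * (M ^\<^sub>m k) $$ (i, j))"
    using ij by (intro index_mat_poly[OF M]) (auto simp: N_def degree_pCons_le le_imp_less_Suc)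
  also have "\<dots> = (\<Sum>k<N. coeff p k * (M ^\<^sub>m k * M) $$ (i, j))"
    by (subst sum.lessThan_Suc_shift) simp
  also have "\<dots> = (\<Sum>k<N. \<Sum>l<n. coeff p k * (M ^\<^sub>m k) $$ (i, l) * M $$ (l, j))"
    using M ij by (simp add: scalar_prod_def sum_distrib_left atLeast0LessThan ac_simps)
  also have "\<dots> = (\<Sum>l<n. (\<Sum>k<N. coeff p k * (M ^\<^sub>m k) $$ (i, l)) * M $$ (l, j))"
    by (subst sum.swap) (simp add: sum_distrib_right)
  also have "\<dots> = (\<Sum>l<n. mat_poly p M $$ (i, l) * M $$ (l, j))"
    using ij by (intro sum.cong refl) (simp add: index_mat_poly[OF M, where N = N] N_def)
  also have "\<dots> = (mat_poly p M * M) $$ (i, j)"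
    using M ij by (simp add: scalar_prod_def atLeast0LessThan)
  finally show "mat_poly (pCons 0 p) M $$ (i, j) = (mat_poly p M * M) $$ (i, j)" .
qed (use M in auto)

lemma mat_poly_pCons:
  assumes M: "M \<in> carrier_mat n n"
  shows "mat_poly (pCons a p) M = a \<cdot>\<^sub>m 1\<^sub>m n + mat_poly p M * M"
proof -
  have "pCons a p = [:a:] + pCons 0 p" by simp
  also have "mat_poly \<dots> M = a \<cdot>\<^sub>m 1\<^sub>m n + mat_poly p M * M"
    by (simp only: mat_poly_add[OF M] mat_poly_const[OF M] mat_poly_shift[OF M])
  finally show ?thesis .
qed

lemma mat_poly_linear:
  assumes M: "M \<in> carrier_mat n n"
  shows "mat_poly [:-a, 1:] M = M - a \<cdot>\<^sub>m 1\<^sub>m n"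
  using M by (intro eq_matI) (auto simp: mat_poly_pCons[OF M] mat_poly_0[OF M])

lemma mat_poly_mult:
  assumes M: "M \<in> carrier_mat n n"
  shows "mat_poly (p * q) M = mat_poly p M * mat_poly q M"
proof (induction q rule: pCons_induct)
  case 0
  then show ?case using M by (simp add: mat_poly_0)
next
  case (pCons b q)
  let ?P = "mat_poly p M" and ?Q = "mat_poly q M"
  have "mat_poly (p * pCons b q) M = b \<cdot>\<^sub>m ?P + ?P * ?Q * M"
    by (simp add: mult_pCons_right mat_poly_add[OF M] mat_poly_smult[OF M] mat_poly_shift[OF M]
        pCons)
  also have "\<dots> = ?P * (b \<cdot>\<^sub>m 1\<^sub>m n + ?Q * M)"
    using M by (subst mult_add_distrib_mat[of _ n n _ n])
      (auto simp: mult_smult_distrib[of _ n n _ n] assoc_mult_mat[of _ n n _ n _ n])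
  finally show ?case by (simp add: mat_poly_pCons[OF M])
qed

lemma mat_poly_similar_mat_wit:
  assumes "similar_mat_wit M T S S'"
  shows "mat_poly p M = S * mat_poly p T * S'"
proof -
  obtain n where "n = dim_row M" by simp
  note wit = similar_mat_witD[OF this assms]
  show ?thesis
  proof (induction p rule: pCons_induct)
    case 0
    then show ?case using wit by (simp add: mat_poly_0)
  next
    case (pCons a p)
    define P where "P = mat_poly p T"
    have P: "P \<in> carrier_mat n n" using wit unfolding P_def by simp
    have "mat_poly (pCons a p) M = a \<cdot>\<^sub>m (S * S') + (S * P * S') * (S * T * S')"
      unfolding mat_poly_pCons[OF wit(4)] pCons P_def wit(1) wit(3)[symmetric] ..
    also have "(S * P * S') * (S * T * S') = S * (P * (S' * S) * T) * S'"
      using wit(5-7) P by (simp add: assoc_mult_mat[of _ n n _ n _ n])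
    also have "P * (S' * S) = P" using wit(2) P by simp
    also have "a \<cdot>\<^sub>m (S * S') + S * (P * T) * S' = S * (a \<cdot>\<^sub>m 1\<^sub>m n + P * T) * S'"
      using wit(5-7) P
      by (simp add: mult_add_distrib_mat[of _ n n _ n] add_mult_distrib_mat[of _ n n _ _ n]
          mult_smult_distrib[of _ n n _ n] mult_smult_assoc_mat[of _ n n _ n])
    finally show ?case using wit by (simp add: mat_poly_pCons P_def)
  qed
qed

lemma upper_triangular_diag_factor_mult_rows_zero:
  fixes B :: "'a :: comm_ring_1 mat"
  assumes B: "B \<in> carrier_mat n n" "upper_triangular B" and R: "R \<in> carrier_mat n n"
    and rows: "\<And>i j. k < i \<Longrightarrow> i < n \<Longrightarrow> j < n \<Longrightarrow> R $$ (i, j) = 0"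
    and ij: "k \<le> i" "i < n" "j < n"
  shows "((B - B $$ (k, k) \<cdot>\<^sub>m 1\<^sub>m n) * R) $$ (i, j) = 0"
proof -
  have "(B - B $$ (k, k) \<cdot>\<^sub>m 1\<^sub>m n) $$ (i, l) * R $$ (l, j) = 0" if "l < n" for l
  proof (cases "k < l")
    case False
    with ij that B show ?thesis
      by (cases "l = i") (auto simp: upper_triangularD)
  qed (use rows that ij in auto)
  then show ?thesis
    using B R ij by (simp add: scalar_prod_def)
qed

lemma cayley_hamilton_upper_triangular:
  fixes B :: "'a :: comm_ring_1 mat"
  assumes B: "B \<in> carrier_mat n n" "upper_triangular B"
  shows "mat_poly (char_poly B) B = 0\<^sub>m n n"
proof -
  define ds where "ds = diag_mat B"
  define R where "R k = mat_poly (\<Prod>a \<leftarrow> drop k ds. [:-a, 1:]) B" for k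
  have len: "length ds = n" using B unfolding ds_def diag_mat_def by simp
  have rows: "\<forall>i j. k \<le> i \<longrightarrow> i < n \<longrightarrow> j < n \<longrightarrow> R k $$ (i, j) = 0" if "k \<le> n" for k
    using that
  proof (induction k rule: inc_induct)
    case (step k)
    then have "ds ! k = B $$ (k, k)"
      using B by (simp add: ds_def diag_mat_def)
    then have "drop k ds = B $$ (k, k) # drop (Suc k) ds"
      using step len by (metis Cons_nth_drop_Suc)
    then have "R k = (B - B $$ (k, k) \<cdot>\<^sub>m 1\<^sub>m n) * R (Suc k)"
      unfolding R_def
      by (simp only: list.map prod_list.Cons mat_poly_mult[OF B(1)] mat_poly_linear[OF B(1)])
    moreover have "R (Suc k) \<in> carrier_mat n n" using B(1) by (simp add: R_def)
    ultimately show ?case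
      using upper_triangular_diag_factor_mult_rows_zero[OF B] step.IH by auto
  qed auto
  have "char_poly B = (\<Prod>a \<leftarrow> drop 0 ds. [:-a, 1:])"
    using char_poly_upper_triangular[OF B] unfolding ds_def by simp
  then show ?thesis
    using rows[of 0] B by (intro eq_matI) (auto simp: R_def)
qed

lemma cayley_hamilton_complex:
  fixes M :: "complex mat"
  assumes M: "M \<in> carrier_mat n n"
  shows "mat_poly (char_poly M) M = 0\<^sub>m n n"
proof -
  obtain es where "char_poly M = (\<Prod>a \<leftarrow> es. [:-a, 1:])"
    using char_poly_factorized[OF M] by blast
  then obtain B where B: "B \<in> carrier_mat n n" "upper_triangular B" "similar_mat M B"
    using schur_decomposition_exists[OF M] by blast
  then obtain S S' where wit: "similar_mat_wit M B S S'"
    unfolding similar_mat_def by blast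
  have "mat_poly (char_poly M) M = S * mat_poly (char_poly B) B * S'"
    using char_poly_similar[OF B(3)] mat_poly_similar_mat_wit[OF wit] by simp
  also have "\<dots> = 0\<^sub>m n n"
    using cayley_hamilton_upper_triangular[OF B(1,2)] similar_mat_witD2[OF M wit] by simp
  finally show ?thesis .
qed

section \<open>The representation Phi1\<close>

lemma Phi1_eq_four_block_mat:
  "Phi1 A = four_block_mat (map_mat cl_at_i A) (0\<^sub>m (dim_row A) (dim_col A))
     (0\<^sub>m (dim_row A) (dim_col A)) (map_mat cl_at_neg_i A)"
  unfolding Phi1_def
  by (intro cong_four_block_mat eq_matI)
    (auto simp: cmat0_def cmat1_def cl_at_i_def cl_at_neg_i_def)

lemma Phi1_carrier [simp]: "A \<in> carrier_mat m n \<Longrightarrow> Phi1 A \<in> carrier_mat (2 * m) (2 * n)"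
  unfolding Phi1_eq_four_block_mat by (auto simp: mult_2)

lemma Phi1_dims [simp]:
  "dim_row (Phi1 A) = 2 * dim_row A" "dim_col (Phi1 A) = 2 * dim_col A"
  unfolding Phi1_eq_four_block_mat by (simp_all add: mult_2)

lemma index_cl_mat [simp]:
  assumes "dim_row A1 = dim_row A0" "dim_col A1 = dim_col A0"
  shows "i < dim_row A0 \<Longrightarrow> j < dim_col A0 \<Longrightarrow>
      cl_mat A0 A1 $$ (i, j) = Cl1 (A0 $$ (i, j)) (A1 $$ (i, j))"
    "dim_row (cl_mat A0 A1) = dim_row A0" "dim_col (cl_mat A0 A1) = dim_col A0"
  using assms by (auto simp: cl_mat_def cl_of_def cl_e_def plus_cl1_def times_cl1_def)

lemma cl_conj_mat_dims [simp]:
  "dim_row (cl_conj_mat A) = dim_row A" "dim_col (cl_conj_mat A) = dim_col A"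
  by (simp_all add: cl_conj_mat_def cmat0_def cmat1_def)

lemma cl_sharp_dims [simp]:
  "dim_row (cl_sharp A) = dim_col A" "dim_col (cl_sharp A) = dim_row A"
  by (simp_all add: cl_sharp_def cmat0_def cmat1_def)

lemma map_mat_cl_at_conj:
  "map_mat cl_at_i (cl_conj_mat A) = map_mat cl_at_neg_i A"
  "map_mat cl_at_neg_i (cl_conj_mat A) = map_mat cl_at_i A"
  by (auto intro!: eq_matI simp: cl_conj_mat_def cmat0_def cmat1_def cl_at_i_def cl_at_neg_i_def)

lemma map_mat_cl_at_sharp:
  "map_mat cl_at_i (cl_sharp A) = mat_adjoint (map_mat cl_at_i A)"
  "map_mat cl_at_neg_i (cl_sharp A) = mat_adjoint (map_mat cl_at_neg_i A)"
  by (auto intro!: eq_matI simp: cl_sharp_def cmat0_def cmat1_def cl_at_i_def cl_at_neg_i_def)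

lemma Phi1_inject:
  assumes "A \<in> carrier_mat m n" "B \<in> carrier_mat m n"
  shows "Phi1 A = Phi1 B \<longleftrightarrow> A = B"
  using assms unfolding Phi1_eq_four_block_mat cl1_mat_eq_iff_map_at[OF assms]
  by (subst four_block_mat_inject) auto

lemma Phi1_add:
  assumes "A \<in> carrier_mat m n" "B \<in> carrier_mat m n"
  shows "Phi1 (A + B) = Phi1 A + Phi1 B"
  using assms unfolding Phi1_eq_four_block_mat
  by (intro eq_matI) (auto simp: cl_at_i.hom_add cl_at_neg_i.hom_add)

lemma Phi1_mult:
  assumes "A \<in> carrier_mat m n" "C \<in> carrier_mat n p"
  shows "Phi1 (A * C) = Phi1 A * Phi1 C"
  using assms unfolding Phi1_eq_four_block_mat
  by (simp add: mult_four_block_diag_mat[of _ m n _ m n]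
      cl_at_i.mat_hom_mult cl_at_neg_i.mat_hom_mult)

lemma Phi1_smult: "Phi1 (cl_of c \<cdot>\<^sub>m A) = c \<cdot>\<^sub>m Phi1 A"
  unfolding Phi1_eq_four_block_mat
  by (intro eq_matI) (auto simp: cl_at_i.hom_mult cl_at_neg_i.hom_mult)

lemma Phi1_one: "Phi1 (1\<^sub>m m) = 1\<^sub>m (2 * m)"
  unfolding Phi1_eq_four_block_mat by (simp add: cl_at_i.mat_hom_one cl_at_neg_i.mat_hom_one mult_2)

lemma Phi1_conj:
  assumes "A \<in> carrier_mat m n"
  shows "Phi1 (cl_conj_mat A) =
    four_block_mat (0\<^sub>m m m) (1\<^sub>m m) (1\<^sub>m m) (0\<^sub>m m m) * Phi1 A *
    four_block_mat (0\<^sub>m n n) (1\<^sub>m n) (1\<^sub>m n) (0\<^sub>m n n)"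
  using assms unfolding Phi1_eq_four_block_mat
  by (simp add: swap_four_block_diag_mat map_mat_cl_at_conj)

lemma Phi1_sharp: "Phi1 (cl_sharp A) = mat_adjoint (Phi1 A)"
  unfolding Phi1_eq_four_block_mat
  by (simp add: mat_adjoint_four_block_mat[of _ "dim_row A" "dim_col A" _ "dim_col A" _ "dim_row A"]
      map_mat_cl_at_sharp)

lemma reconstruct_from_Phi1:
  assumes A: "A \<in> carrier_mat m n"
  shows "A = cl_of (1/4) \<cdot>\<^sub>m
    (block_row (Cl1 1 (-\<i>) \<cdot>\<^sub>m 1\<^sub>m m) (Cl1 \<i> (-1) \<cdot>\<^sub>m 1\<^sub>m m) * map_mat cl_of (Phi1 A) *
     transpose_mat (block_row (Cl1 1 (-\<i>) \<cdot>\<^sub>m 1\<^sub>m n) (Cl1 (-\<i>) 1 \<cdot>\<^sub>m 1\<^sub>m n)))"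
proof -
  have Phi1_cl: "map_mat cl_of (Phi1 A) =
      four_block_mat (map_mat (cl_of \<circ> cl_at_i) A) (0\<^sub>m m n) (0\<^sub>m m n)
        (map_mat (cl_of \<circ> cl_at_neg_i) A)"
    using A unfolding Phi1_eq_four_block_mat by (intro eq_matI) (auto simp: cl_of_def zero_cl1_def)
  \<comment> \<open>(1 - ie)^2 = 2 (1 - ie) and (i - e)(e - i) = 2 (1 + ie), and (1 -+ ie)/2 are the
    idempotents of the splitting of C_1\<close>
  have entry: "cl_of (1/4) * (Cl1 1 (-\<i>) * Cl1 1 (-\<i>) * cl_of (cl_at_i x) +
      Cl1 \<i> (-1) * Cl1 (-\<i>) 1 * cl_of (cl_at_neg_i x)) = x" for x
    by (cases x)
      (simp add: cl_of_def cl_at_i_def cl_at_neg_i_def times_cl1_def plus_cl1_def algebra_simps)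
  show ?thesis
    using A unfolding Phi1_cl
    by (subst block_row_mult_four_block_diag_mult_block_col[of _ m n])
      (auto intro!: eq_matI simp: entry)
qed

lemma det_Phi1:
  assumes "A \<in> carrier_mat n n"
  shows "det (Phi1 A) = cl_at_i (det A) * cl_at_neg_i (det A)"
  using assms unfolding Phi1_eq_four_block_mat
  by (subst det_four_block_mat_lower_left_zero[of _ n _ n]) auto

lemma invertible_Phi1_iff:
  assumes "A \<in> carrier_mat n n"
  shows "invertible_mat (Phi1 A) \<longleftrightarrow> invertible_mat A"
  using assms
  by (simp add: invertible_mat_iff_det_dvd_one[of _ "2 * n"] invertible_mat_iff_det_dvd_one[of _ n]
      det_Phi1 cl_dvd_one_iff dvd_field_iff)

lemma Phi1_inverts_mat:
  assumes A: "A \<in> carrier_mat n n" and "inverts_mat A X" "inverts_mat X A"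
  shows "inverts_mat (Phi1 A) (Phi1 X) \<and> inverts_mat (Phi1 X) (Phi1 A)"
proof -
  have X: "X \<in> carrier_mat n n" using inverts_mat_carrier assms by blast
  have "A * X = 1\<^sub>m n" "X * A = 1\<^sub>m n" using assms X unfolding inverts_mat_def by auto
  then show ?thesis
    using A X unfolding inverts_mat_def by (simp add: Phi1_mult[symmetric] Phi1_one)
qed

lemma index_poly_mat_eval:
  assumes A: "A \<in> carrier_mat n n"
  shows "poly_mat_eval p A \<in> carrier_mat n n"
    and "i < n \<Longrightarrow> j < n \<Longrightarrow>
      poly_mat_eval p A $$ (i, j) = (\<Sum>k\<le>degree p. cl_of (coeff p k) * (A ^\<^sub>m k) $$ (i, j))"
proof -
  have foldr: "foldr (\<lambda>k M. cl_of (coeff p k) \<cdot>\<^sub>m A ^\<^sub>m k + M) ks (0\<^sub>m n n) \<in> carrier_mat n n \<and>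
    (\<forall>i<n. \<forall>j<n. foldr (\<lambda>k M. cl_of (coeff p k) \<cdot>\<^sub>m A ^\<^sub>m k + M) ks (0\<^sub>m n n) $$ (i, j) =
      (\<Sum>k\<leftarrow>ks. cl_of (coeff p k) * (A ^\<^sub>m k) $$ (i, j)))" for ks
    by (induction ks) (use A in auto)
  have "set [0..<Suc (degree p)] = {..degree p}" by auto
  then show "poly_mat_eval p A \<in> carrier_mat n n"
    and "i < n \<Longrightarrow> j < n \<Longrightarrow>
      poly_mat_eval p A $$ (i, j) = (\<Sum>k\<le>degree p. cl_of (coeff p k) * (A ^\<^sub>m k) $$ (i, j))"
    using foldr[of "[0..<Suc (degree p)]"] A unfolding poly_mat_eval_def
    by (auto simp del: upt_Suc simp: sum_set_upt_conv_sum_list_nat[symmetric])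
qed

lemma map_mat_poly_mat_eval:
  assumes "comm_ring_hom h" and h_of: "\<And>c. h (cl_of c) = c" and A: "A \<in> carrier_mat n n"
  shows "map_mat h (poly_mat_eval p A) = mat_poly p (map_mat h A)"
proof -
  interpret comm_ring_hom h by fact
  show ?thesis
    using A index_poly_mat_eval[OF A] carrier_matD[OF index_poly_mat_eval(1)[OF A]]
    by (intro eq_matI) (auto simp: mat_poly_def hom_sum hom_mult h_of mat_hom_pow[OF A, symmetric])
qed

lemma poly_mat_eval_char_poly_Phi1:
  assumes A: "A \<in> carrier_mat n n"
  shows "poly_mat_eval (char_poly (Phi1 A)) A = 0\<^sub>m n n"
proof -
  let ?P = "map_mat cl_at_i A" and ?Q = "map_mat cl_at_neg_i A"
  have PQ: "?P \<in> carrier_mat n n" "?Q \<in> carrier_mat n n" using A by auto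
  have "char_poly (Phi1 A) = char_poly ?P * char_poly ?Q"
    using A char_poly_factorized[OF PQ(1)] char_poly_factorized[OF PQ(2)]
    by (intro char_poly_0_block[OF _ _ _ PQ(1) _ PQ(2)]) (auto simp: Phi1_eq_four_block_mat)
  then have "mat_poly (char_poly (Phi1 A)) ?P = 0\<^sub>m n n" "mat_poly (char_poly (Phi1 A)) ?Q = 0\<^sub>m n n"
    using PQ by (simp_all add: mat_poly_mult[of _ n] cayley_hamilton_complex
        mult.commute[of "char_poly ?P"])
  moreover have "map_mat cl_at_i (0\<^sub>m n n) = 0\<^sub>m n n" "map_mat cl_at_neg_i (0\<^sub>m n n) = 0\<^sub>m n n"
    by (auto intro!: eq_matI)
  ultimately show ?thesis
    using A index_poly_mat_eval(1)[OF A]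
    by (subst cl1_mat_eq_iff_map_at[of _ n n])
      (auto simp: map_mat_poly_mat_eval[OF cl_at_i.comm_ring_hom_axioms]
        map_mat_poly_mat_eval[OF cl_at_neg_i.comm_ring_hom_axioms])
qed

theorem corollary7:
  fixes A B :: "cl1 mat" and C :: "cl1 mat" and c :: complex and m n p :: nat
  assumes "A \<in> carrier_mat m n" and "B \<in> carrier_mat m n" and "C \<in> carrier_mat n p"
  shows
    "(A = B \<longleftrightarrow> Phi1 A = Phi1 B)
   \<and> Phi1 (A + B) = Phi1 A + Phi1 B
   \<and> Phi1 (A * C) = Phi1 A * Phi1 C
   \<and> Phi1 (cl_of c \<cdot>\<^sub>m A) = c \<cdot>\<^sub>m Phi1 A
   \<and> Phi1 (1\<^sub>m m) = 1\<^sub>m (2 * m)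
   \<and> Phi1 (cl_conj_mat A) =
       four_block_mat (0\<^sub>m m m) (1\<^sub>m m) (1\<^sub>m m) (0\<^sub>m m m) * Phi1 A *
       four_block_mat (0\<^sub>m n n) (1\<^sub>m n) (1\<^sub>m n) (0\<^sub>m n n)
   \<and> Phi1 (cl_sharp A) = mat_adjoint (Phi1 A)
   \<and> A = cl_of (1/4) \<cdot>\<^sub>m
         (block_row (Cl1 1 (-\<i>) \<cdot>\<^sub>m 1\<^sub>m m) (Cl1 \<i> (-1) \<cdot>\<^sub>m 1\<^sub>m m)
          * map_mat cl_of (Phi1 A)
          * transpose_mat (block_row (Cl1 1 (-\<i>) \<cdot>\<^sub>m 1\<^sub>m n) (Cl1 (-\<i>) 1 \<cdot>\<^sub>m 1\<^sub>m n)))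
   \<and> (m = n \<longrightarrow>
        (invertible_mat A \<longleftrightarrow> invertible_mat (Phi1 A))
      \<and> (\<forall>X. inverts_mat A X \<and> inverts_mat X A \<longrightarrow>
             inverts_mat (Phi1 A) (Phi1 X) \<and> inverts_mat (Phi1 X) (Phi1 A))
      \<and> poly_mat_eval (char_poly (Phi1 A)) A = 0\<^sub>m m m)"
  using assms Phi1_inject[OF assms(1,2)] Phi1_add[OF assms(1,2)] Phi1_mult[OF assms(1,3)]
    Phi1_smult Phi1_one Phi1_conj[OF assms(1)] Phi1_sharp reconstruct_from_Phi1[OF assms(1)]
    invertible_Phi1_iff[of A n] Phi1_inverts_mat[of A n] poly_mat_eval_char_poly_Phi1[of A n]
  by auto

end
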